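(* Let $\Delta\subset\mathbb{Z}^2\setminus\{(0,0)\}$ be a finite multiset which is balanced, non-degenerate and even, with associated polygon $P_\Delta$, sides $\sigma\in P^1_\Delta$, numbers $n^\sigma$ and $k^\sigma_i$ as in the context. Then the set of sequences $\boldsymbol z=(z^\sigma_i)_{\sigma\in P^1_\Delta,\,1\le i\le n^\sigma}$, $z^\sigma_i\in\operatorname{Tor}(\sigma)^\times$, satisfying the Menelaus $\Delta$-condition forms an algebraic hypersurface $\operatorname{Men}(\Delta)\subset\prod_{\sigma\in P^1_\Delta}\operatorname{Tor}(\sigma)^{n^\sigma}$.
   Context: A multiset $\Delta\subset\mathbb{Z}^2\setminus\{(0,0)\}$ is balanced if its elements sum to $0$, non-degenerate if its elements span $\mathbb{R}^2$, and even if $\Delta\subset(2\mathbb{Z})^2$. Rotating each $\boldsymbol a\in\Delta$ counterclockwise by $\pi/2$ and concatenating the resulting vectors gives the counterclockwise oriented boundary of a convex lattice polygon $P_\Delta$ (defined up to translation). $P^1_\Delta$ denotes the set of sides of $P_\Delta$; for $\sigma\in P^1_\Delta$, let $\boldsymbol a^\sigma_1,\dots,\boldsymbol a^\sigma_{n^\sigma}$ be the elements of $\Delta$ that are outer normals to $\sigma$, and let $2k^\sigma_i$ be the lattice length of $\boldsymbol a^\sigma_i$ (its Euclidean length divided by the length of a primitive parallel integral vector). $\operatorname{Tor}(P_\Delta)$ is the complex toric surface of $P_\Delta$, $\operatorname{Tor}(\sigma)$ the toric divisor corresponding to $\sigma$, $\operatorname{Tor}(\sigma)^\times\cong\mathbb{C}^\times$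 its dense orbit, and $\mathcal{L}_{P_\Delta}$ the tautological line bundle (its global sections are spanned by the monomials $z^\omega$, $\omega\in P_\Delta\cap\mathbb{Z}^2$). A sequence $\boldsymbol z=(z^\sigma_i)$ with $z^\sigma_i\in\operatorname{Tor}(\sigma)^\times$ satisfies the Menelaus $\Delta$-condition if there is a curve $C\in|\mathcal{L}_{P_\Delta}|$ containing no toric divisor as a component such that, for each $\sigma\in P^1_\Delta$, the scheme-theoretic intersection of $C$ and $\operatorname{Tor}(\sigma)$ equals $\sum_{i=1}^{n^\sigma}2k^\sigma_i z^\sigma_i$. *)

theory Defs
  imports "HOL-Analysis.Analysis"
begin

definition ip :: "int \<times> int \<Rightarrow> int \<times> int \<Rightarrow> int" where
  "ip a b = fst a * fst b + snd a * snd b"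

definition det2 :: "int \<times> int \<Rightarrow> int \<times> int \<Rightarrow> int" where
  "det2 a b = fst a * snd b - snd a * fst b"

definition toR :: "int \<times> int \<Rightarrow> real \<times> real" where
  "toR a = (real_of_int (fst a), real_of_int (snd a))"

definition llen :: "int \<times> int \<Rightarrow> nat" where
  "llen a = nat (gcd (fst a) (snd a))"

definition prim :: "int \<times> int \<Rightarrow> int \<times> int" where
  "prim a = (fst a div gcd (fst a) (snd a), snd a div gcd (fst a) (snd a))"

definition primitive :: "int \<times> int \<Rightarrow> bool" where
  "primitive u \<longleftrightarrow> gcd (fst u) (snd u) = 1"

definition rot :: "int \<times> int \<Rightarrow> int \<times> int" where
  "rot a = (- snd a, fst a)"

text \<open>The multiset Delta is given as a list D (the list order indexes the elements,
  so that a sequence z = (z_i^sigma) becomes a function on indices j < length D).\<close>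

definition balanced :: "(int \<times> int) list \<Rightarrow> bool" where
  "balanced D \<longleftrightarrow> sum_list D = (0, 0)"

definition nondegenerate :: "(int \<times> int) list \<Rightarrow> bool" where
  "nondegenerate D \<longleftrightarrow> (\<exists>a\<in>set D. \<exists>b\<in>set D. det2 a b \<noteq> 0)"

definition even_multiset :: "(int \<times> int) list \<Rightarrow> bool" where
  "even_multiset D \<longleftrightarrow> (\<forall>a\<in>set D. even (fst a) \<and> even (snd a))"

definition face :: "(real \<times> real) set \<Rightarrow> int \<times> int \<Rightarrow> (real \<times> real) set" where
  "face P u = {x \<in> P. \<forall>y\<in>P. y \<bullet> toR u \<le> x \<bullet> toR u}"

definition lat :: "(real \<times> real) set \<Rightarrow> (int \<times> int) set" where
  "lat P = {w. toR w \<in> P}"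

text \<open>P is (a translate of) the polygon P_Delta: a convex lattice polygon whose side with
  outer primitive normal u has lattice length equal to the sum of the lattice lengths of
  the elements of D that are positive multiples of u (and which is a vertex if there are
  none).  By Minkowski's theorem this determines P up to translation.\<close>

definition is_P_Delta :: "(int \<times> int) list \<Rightarrow> (real \<times> real) set \<Rightarrow> bool" where
  "is_P_Delta D P \<longleftrightarrow>
     (\<exists>S. finite S \<and> P = convex hull (toR ` S)) \<and>
     (\<forall>u. primitive u \<longrightarrow>
        card (lat (face P u)) =
          1 + (\<Sum>j\<in>{j. j < length D \<and> prim (D ! j) = u}. llen (D ! j)))"

text \<open>Coordinate on Tor(sigma)^x: for the side with outer normal u, the lattice points of
  the side are w0 + i * rot u; the character z^(rot u) restricted to Tor(sigma)^x is the
  coordinate t.  A linear functional w with ip w (rot u) = 1 reads off the index i (up to a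
  constant shift).\<close>

definition dualv :: "int \<times> int \<Rightarrow> int \<times> int" where
  "dualv u = (SOME w. ip w (rot u) = 1)"

text \<open>A curve C in |L_P| is the zero set of a polynomial
  f = sum_{w in P cap Z^2} c_w z^w.  Its scheme-theoretic intersection with Tor(sigma)
  (sigma with outer normal u) is the divisor of the truncation f^sigma; the condition
  C . Tor(sigma) = sum 2 k_i z_i (all points in Tor(sigma)^x, and Tor(sigma) not a
  component) says that f^sigma equals, up to a nonzero constant and a monomial factor,
  prod_i (t - z_i)^(2 k_i).\<close>

definition menelaus :: "(int \<times> int) list \<Rightarrow> (real \<times> real) set \<Rightarrow> (nat \<Rightarrow> complex) \<Rightarrow> bool" where
  "menelaus D P z \<longleftrightarrow>
     (\<exists>c :: int \<times> int \<Rightarrow> complex.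
        \<forall>j < length D.
          (\<exists>lam :: complex. lam \<noteq> 0 \<and> (\<exists>s :: int. \<forall>t :: complex. t \<noteq> 0 \<longrightarrow>
             (\<Sum>w\<in>lat (face P (prim (D ! j))). c w * t powi ip w (dualv (prim (D ! j)))) =
             lam * t powi s *
               (\<Prod>i\<in>{i. i < length D \<and> prim (D ! i) = prim (D ! j)}. (t - z i) ^ llen (D ! i)))))"

text \<open>The ambient torus prod_sigma Tor(sigma)^(n^sigma) = (C^x)^m, m = length D.\<close>

definition torus :: "nat \<Rightarrow> (nat \<Rightarrow> complex) set" where
  "torus m = {z. (\<forall>j<m. z j \<noteq> 0) \<and> (\<forall>j\<ge>m. z j = 0)}"

definition laurent_poly :: "nat \<Rightarrow> ((nat \<Rightarrow> int) \<Rightarrow> complex) \<Rightarrow> bool" where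
  "laurent_poly m p \<longleftrightarrow> finite {e. p e \<noteq> 0} \<and> (\<forall>e. p e \<noteq> 0 \<longrightarrow> (\<forall>j\<ge>m. e j = 0))"

definition laurent_eval :: "nat \<Rightarrow> ((nat \<Rightarrow> int) \<Rightarrow> complex) \<Rightarrow> (nat \<Rightarrow> complex) \<Rightarrow> complex" where
  "laurent_eval m p z = (\<Sum>e\<in>{e. p e \<noteq> 0}. p e * (\<Prod>j<m. z j powi e j))"

text \<open>An algebraic hypersurface in the torus (C^x)^m: the zero locus of a Laurent polynomial
  which is not a unit of the Laurent polynomial ring (i.e. has at least two terms).\<close>

definition torus_hypersurface :: "nat \<Rightarrow> (nat \<Rightarrow> complex) set \<Rightarrow> bool" where
  "torus_hypersurface m X \<longleftrightarrow>
     (\<exists>p. laurent_poly m p \<and> (\<exists>e1 e2. e1 \<noteq> e2 \<and> p e1 \<noteq> 0 \<and> p e2 \<noteq> 0) \<and>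
          X = {z \<in> torus m. laurent_eval m p z = 0})"

end

theory Submission
  imports Defs "HOL-Computational_Algebra.Polynomial" "HOL-Combinatorics.Orbits"
begin

text \<open>On the side of \<open>P\<^sub>\<Delta>\<close> with outer normal \<open>u\<close>, the truncation of a curve is prescribed
  by the Menelaus points up to a nonzero scalar \<open>\<lambda>\<^sub>u\<close> and a monomial: it is
  \<open>\<lambda>\<^sub>u \<Prod>\<^sub>i (t - z\<^sub>i)^(2k\<^sub>i)\<close>. Its coefficient at the first lattice point of the side is
  \<open>\<lambda>\<^sub>u \<Prod>\<^sub>i z\<^sub>i^(2k\<^sub>i)\<close> (no sign, the exponents being even) and at the last one \<open>\<lambda>\<^sub>u\<close>. The last
  point of a side is the first point of the next one counterclockwise, and the outer normals
  form a single cycle under this successor map. So the scalars can be chosen consistently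
  exactly when the product of \<open>z\<^sub>j^(2k\<^sub>j)\<close> over all \<open>j\<close> is \<open>1\<close>, and \<open>Men(\<Delta>)\<close> is the zero set
  of this binomial in the torus.\<close>

section \<open>Integer vectors in the plane\<close>

definition zscale :: "int \<Rightarrow> int \<times> int \<Rightarrow> int \<times> int" where
  "zscale k a = (k * fst a, k * snd a)"

lemma ip_commute: "ip a b = ip b a"
  by (simp add: ip_def mult.commute)

lemma ip_add [simp]: "ip (x + y) w = ip x w + ip y w"
  by (simp add: ip_def algebra_simps)

lemma ip_add_right [simp]: "ip x (v + w) = ip x v + ip x w"
  by (simp add: ip_def algebra_simps)

lemma ip_zscale [simp]: "ip (zscale k x) w = k * ip x w"
  by (simp add: ip_def zscale_def algebra_simps)

lemma ip_zscale_right [simp]: "ip x (zscale k w) = k * ip x w"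
  by (simp add: ip_commute[of x])

lemma ip_rot: "ip x (rot u) = det2 u x"
  by (simp add: ip_def rot_def det2_def algebra_simps)

lemma ip_rot_left [simp]: "ip (rot u) v = det2 u v"
  by (simp add: ip_commute ip_rot)

lemma ip_self_pos: "u \<noteq> (0, 0) \<Longrightarrow> ip u u > 0"
  by (cases u) (simp add: ip_def sum_squares_gt_zero_iff)

lemma inner_toR: "toR a \<bullet> toR w = real_of_int (ip a w)"
  by (simp add: toR_def ip_def)

lemma det2_antisym: "det2 a b = - det2 b a"
  by (simp add: det2_def)

lemma det2_self [simp]: "det2 a a = 0"
  by (simp add: det2_def)

lemma det2_add_right [simp]: "det2 u (x + y) = det2 u x + det2 u y"
  by (simp add: det2_def algebra_simps)

lemma det2_add_left [simp]: "det2 (x + y) u = det2 x u + det2 y u"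
  by (simp add: det2_def algebra_simps)

lemma det2_zscale_right [simp]: "det2 u (zscale k x) = k * det2 u x"
  by (simp add: det2_def zscale_def algebra_simps)

lemma det2_zscale_left [simp]: "det2 (zscale k x) u = k * det2 x u"
  by (simp add: det2_def zscale_def algebra_simps)

lemma det2_uminus_right [simp]: "det2 u (- x) = - det2 u x"
  by (simp add: det2_def)

lemma det2_uminus_left [simp]: "det2 (- x) u = - det2 x u"
  by (simp add: det2_def)

lemma det2_sum_list: "det2 u (sum_list xs) = (\<Sum>x\<leftarrow>xs. det2 u x)"
  by (induction xs) (simp_all add: det2_def algebra_simps)

lemma eq_if_ip_eq:
  assumes "det2 u v \<noteq> 0" "ip x u = ip y u" "ip x v = ip y v"
  shows "x = y"
proof -
  have "(fst x - fst y) * det2 u v = snd v * (ip x u - ip y u) - snd u * (ip x v - ip y v)"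
       "(snd x - snd y) * det2 u v = fst u * (ip x v - ip y v) - fst v * (ip x u - ip y u)"
    by (simp_all add: det2_def ip_def algebra_simps)
  then show ?thesis using assms by (simp add: prod_eq_iff)
qed

lemma det2_eq_0_if_parallel_to:
  assumes "u \<noteq> (0, 0)" "det2 u a = 0" "det2 u b = 0"
  shows "det2 a b = 0"
proof -
  have "fst u * det2 a b = fst a * det2 u b - fst b * det2 u a"
       "snd u * det2 a b = snd a * det2 u b - snd b * det2 u a"
    by (simp_all add: det2_def algebra_simps)
  then show ?thesis using assms by (cases u) auto
qed

text \<open>Orientation is transitive inside an open half-plane bounded by a line through the
  origin; the sign \<open>s\<close> selects one of the two half-planes.\<close>

lemma det2_pos_trans:
  assumes "0 < s * det2 w a" "0 < s * det2 w b" "0 < s * det2 w c"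
    and "det2 a b > 0" "det2 b c > 0"
  shows "det2 a c > 0"
proof -
  have "det2 a b * (s * det2 w c) + det2 b c * (s * det2 w a) + det2 c a * (s * det2 w b) = 0"
    by (simp add: det2_def algebra_simps)
  moreover have "det2 a b * (s * det2 w c) > 0" "det2 b c * (s * det2 w a) > 0"
    using assms by simp_all
  ultimately have "det2 c a * (s * det2 w b) < 0" by linarith
  with assms(2) have "det2 c a < 0"
    using mult_less_0_iff[of "det2 c a" "s * det2 w b"] by linarith
  then show ?thesis by (simp add: det2_antisym[of c a])
qed

lemma prim_zscale:
  assumes "a \<noteq> (0, 0)"
  shows "primitive (prim a)" and "a = zscale (gcd (fst a) (snd a)) (prim a)"
    and "gcd (fst a) (snd a) > 0" and "int (llen a) = gcd (fst a) (snd a)"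
proof -
  have nz: "fst a \<noteq> 0 \<or> snd a \<noteq> 0" using assms by (simp add: prod_eq_iff)
  then show "gcd (fst a) (snd a) > 0" by simp
  then show "int (llen a) = gcd (fst a) (snd a)" by (simp add: llen_def)
  show "primitive (prim a)"
    using div_gcd_coprime[OF nz] by (simp add: primitive_def prim_def coprime_iff_gcd_eq_1)
  show "a = zscale (gcd (fst a) (snd a)) (prim a)"
    by (simp add: zscale_def prim_def prod_eq_iff)
qed

lemma llen_pos: "a \<noteq> (0, 0) \<Longrightarrow> llen a > 0"
  using prim_zscale(3,4) by (metis of_nat_0_less_iff)

lemma primitive_nonzero: "primitive u \<Longrightarrow> u \<noteq> (0, 0)"
  by (auto simp: primitive_def)

lemma primitive_rot: "primitive u \<Longrightarrow> primitive (rot u)"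
  by (simp add: primitive_def rot_def gcd.commute)

lemma orthogonal_to_primitive:
  assumes "primitive u" "ip d u = 0"
  obtains k where "d = zscale k (rot u)"
proof -
  obtain p q where pq: "p * fst u + q * snd u = 1"
    using bezout_int[of "fst u" "snd u"] assms(1) by (auto simp: primitive_def)
  have e: "fst d * fst u + snd d * snd u = 0" using assms(2) by (simp add: ip_def)
  have "fst d = fst d * (p * fst u + q * snd u)" using pq by simp
  also have "\<dots> = p * (fst d * fst u + snd d * snd u) + (p * snd d - q * fst d) * - snd u"
    by (simp add: algebra_simps)
  finally have 1: "fst d = (p * snd d - q * fst d) * - snd u" using e by simp
  have "snd d = snd d * (p * fst u + q * snd u)" using pq by simp
  also have "\<dots> = q * (fst d * fst u + snd d * snd u) + (p * snd d - q * fst d) * fst u"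
    by (simp add: algebra_simps)
  finally have 2: "snd d = (p * snd d - q * fst d) * fst u" using e by simp
  from 1 2 show ?thesis by (intro that[of "p * snd d - q * fst d"]) (simp add: zscale_def rot_def prod_eq_iff)
qed

lemma ip_dualv_rot: "primitive u \<Longrightarrow> ip (dualv u) (rot u) = 1"
proof -
  assume "primitive u"
  then obtain p q where "p * fst u + q * snd u = 1"
    using bezout_int[of "fst u" "snd u"] by (auto simp: primitive_def)
  then have "ip (- q, p) (rot u) = 1" by (simp add: ip_def rot_def algebra_simps)
  then show ?thesis unfolding dualv_def by (rule someI)
qed

lemma primitive_parallel:
  assumes "primitive a" "primitive b" "det2 a b = 0"
  shows "b = a \<or> b = - a"
proof -
  have "ip b (rot a) = 0" using assms(3) by (simp add: ip_rot)
  then obtain k where "b = zscale k (rot (rot a))"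
    using orthogonal_to_primitive[OF primitive_rot[OF assms(1)]] by blast
  then have b: "b = zscale (- k) a" by (simp add: zscale_def rot_def)
  have "1 = gcd (fst b) (snd b)" using assms(2) by (simp add: primitive_def)
  also have "\<dots> = \<bar>k\<bar>"
    using assms(1) by (simp add: b zscale_def primitive_def flip: gcd_mult_distrib_int)
  finally have "k = 1 \<or> k = -1" by linarith
  then show ?thesis using b by (auto simp: zscale_def prod_eq_iff)
qed

definition ccw_between :: "int \<times> int \<Rightarrow> int \<times> int \<Rightarrow> int \<times> int \<Rightarrow> bool" where
  "ccw_between a x b \<longleftrightarrow> det2 a x > 0 \<and> det2 x b > 0"

lemma ex_min_ratio:
  fixes A B :: "'a \<Rightarrow> int"
  assumes fin: "finite Y" and ne: "Y \<noteq> {}" and pos: "\<forall>y\<in>Y. B y > 0"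
  obtains y0 where "y0 \<in> Y" "\<forall>y\<in>Y. A y0 * B y \<le> A y * B y0"
proof -
  define r where "r y = real_of_int (A y) / real_of_int (B y)" for y
  define y0 where "y0 = arg_min_on r Y"
  have y0: "y0 \<in> Y" using arg_min_if_finite(1)[OF fin ne] by (simp add: y0_def)
  have "A y0 * B y \<le> A y * B y0" if y: "y \<in> Y" for y
  proof -
    have "\<not> r y < r y0" using arg_min_if_finite(2)[OF fin ne, of r] y unfolding y0_def by blast
    moreover have "real_of_int (B y) > 0" "real_of_int (B y0) > 0" using pos y y0 by simp_all
    ultimately have "real_of_int (A y0) * real_of_int (B y) \<le> real_of_int (A y) * real_of_int (B y0)"
      by (simp add: r_def field_simps)
    then show ?thesis by (metis of_int_le_iff of_int_mult)
  qed
  then show ?thesis using y0 that by blast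
qed

section \<open>Cocycles along a cycle\<close>

lemma cyclic_on_image_eq:
  assumes "cyclic_on f S" shows "f ` S = S"
proof -
  obtain s where "s \<in> S" and s: "S = orbit f s" using assms by (auto simp: cyclic_on_def)
  have "y \<in> f ` S" if "y \<in> orbit f s" for y
    using that
  proof induction
    case base
    then show ?case using \<open>s \<in> S\<close> by blast
  next
    case (step y)
    then show ?case using s by blast
  qed
  moreover have "f ` S \<subseteq> S" using cyclic_on_inI[OF assms] by blast
  ultimately show ?thesis using s by blast
qed

lemma cyclic_on_cocycle_prod_eq_1:
  fixes R G :: "'a \<Rightarrow> 'b::field"
  assumes cyc: "cyclic_on f S" and G: "\<forall>x\<in>S. G x \<noteq> 0 \<and> G x = R x * G (f x)"
  shows "(\<Prod>x\<in>S. R x) = 1"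
proof -
  have fin: "finite S" using cyc by (rule finite_cyclic_on)
  have img: "f ` S = S" using cyc by (rule cyclic_on_image_eq)
  then have inj: "inj_on f S" using fin by (simp add: eq_card_imp_inj_on)
  have "(\<Prod>x\<in>S. G x) = (\<Prod>x\<in>S. R x) * (\<Prod>x\<in>S. G (f x))"
    using G by (simp add: prod.distrib)
  also have "(\<Prod>x\<in>S. G (f x)) = (\<Prod>x\<in>S. G x)"
    using prod.reindex[OF inj, of G] img by simp
  finally have "(\<Prod>x\<in>S. G x) = (\<Prod>x\<in>S. R x) * (\<Prod>x\<in>S. G x)" .
  moreover have "(\<Prod>x\<in>S. G x) \<noteq> 0" using G prod_zero_iff[OF fin, of G] by blast
  ultimately show ?thesis by simp
qed

text \<open>The solution is \<open>G x = R x * R (f x) * \<dots>\<close>, the product running from \<open>x\<close> up to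
  a fixed base point \<open>s\<close> of the cycle; the relation at \<open>s\<close> itself is \<open>\<Prod>R = 1\<close>.\<close>

lemma cyclic_on_cocycle_exists:
  fixes R :: "'a \<Rightarrow> 'b::field"
  assumes cyc: "cyclic_on f S" and R: "\<forall>x\<in>S. R x \<noteq> 0" and prod1: "(\<Prod>x\<in>S. R x) = 1"
  obtains G where "\<forall>x\<in>S. G x \<noteq> 0 \<and> G x = R x * G (f x)"
proof -
  obtain s where s: "s \<in> S" "S = orbit f s" using cyc by (auto simp: cyclic_on_def)
  have orb: "x \<in> S \<Longrightarrow> S = orbit f x" for x using cyc by (simp add: cyclic_on_alldef)
  define G where "G x = (\<Prod>k<funpow_dist f x s. R ((f ^^ k) x))" for x
  have shift: "R x * G (f x) = (\<Prod>k<Suc (funpow_dist f (f x) s). R ((f ^^ k) x))" for x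
    unfolding G_def prod.lessThan_Suc_shift by (simp add: funpow_Suc_right del: funpow.simps)
  have "\<forall>x\<in>S. G x \<noteq> 0 \<and> G x = R x * G (f x)"
  proof (intro ballI conjI)
    fix x assume x: "x \<in> S"
    show "G x \<noteq> 0" using R cyc x by (simp add: G_def cyclic_on_funpow_in)
    show "G x = R x * G (f x)"
    proof (cases "x = s")
      case True
      have self: "s \<in> orbit f s" using s by simp
      have "R s * G (f s) = (\<Prod>k\<in>{0..<funpow_dist1 f s s}. R ((f ^^ k) s))"
        by (simp only: shift atLeast0LessThan)
      also have "\<dots> = (\<Prod>y\<in>S. R y)"
        by (simp add: s(2) orbit_conv_funpow_dist1[OF self] prod.reindex[OF inj_on_funpow_dist1[OF self]])
      finally have "R x * G (f x) = 1" using True prod1 by simp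
      then show ?thesis using True prod1 by (simp add: G_def funpow_dist_0)
    next
      case False
      then have "funpow_dist f x s = Suc (funpow_dist f (f x) s)"
        using orb[OF x] s(1) by (simp add: funpow_dist_step)
      then have "G x = (\<Prod>k<Suc (funpow_dist f (f x) s). R ((f ^^ k) x))"
        by (simp only: G_def)
      then show ?thesis by (simp only: shift)
    qed
  qed
  then show ?thesis by (rule that)
qed

section \<open>Laurent polynomials in one and several variables\<close>

lemma poly_eq_if_eq_off_0:
  fixes p q :: "complex poly"
  assumes "\<forall>t. t \<noteq> 0 \<longrightarrow> poly p t = poly q t"
  shows "p = q"
proof (rule ccontr)
  assume "p \<noteq> q"
  then have "finite {t. poly (p - q) t = 0}" by (intro poly_roots_finite) simp
  moreover have "UNIV - {0} \<subseteq> {t. poly (p - q) t = 0}" using assms by auto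
  ultimately show False using finite_subset infinite_UNIV_char_0 by fastforce
qed

text \<open>The degree bound rules out \<open>m < s\<close>, and \<open>poly q 0 \<noteq> 0\<close> rules out \<open>s < m\<close>.\<close>

lemma powi_times_poly_eq_imp_eq:
  fixes p q :: "complex poly"
  assumes eq: "\<forall>t. t \<noteq> 0 \<longrightarrow> t powi m * poly p t = t powi s * poly q t"
    and deg: "degree p \<le> degree q" and q0: "poly q 0 \<noteq> 0"
  shows "p = q"
proof (cases "m \<le> s")
  case True
  define d where "d = nat (s - m)"
  have "\<forall>t. t \<noteq> 0 \<longrightarrow> poly p t = poly (monom 1 d * q) t"
  proof (intro allI impI)
    fix t :: complex assume "t \<noteq> 0"
    have "s = m + int d" using True by (simp add: d_def)
    then have "t powi s = t powi m * t ^ d"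
      using \<open>t \<noteq> 0\<close> by (simp add: power_int_add)
    then have "t powi m * poly p t = t powi m * (t ^ d * poly q t)"
      using eq \<open>t \<noteq> 0\<close> by simp
    then show "poly p t = poly (monom 1 d * q) t"
      using \<open>t \<noteq> 0\<close> by (simp add: poly_monom)
  qed
  then have "p = monom 1 d * q" by (rule poly_eq_if_eq_off_0)
  moreover have "q \<noteq> 0" using q0 by auto
  ultimately have "d = 0" using deg by (simp add: degree_mult_eq degree_monom_eq)
  with \<open>p = monom 1 d * q\<close> show ?thesis by simp
next
  case False
  define d where "d = nat (m - s)"
  have "d > 0" using False by (simp add: d_def)
  have "\<forall>t. t \<noteq> 0 \<longrightarrow> poly (monom 1 d * p) t = poly q t"
  proof (intro allI impI)
    fix t :: complex assume "t \<noteq> 0"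
    have "m = s + int d" using False by (simp add: d_def)
    then have "t powi m = t powi s * t ^ d"
      using \<open>t \<noteq> 0\<close> by (simp add: power_int_add)
    then have "t powi s * (t ^ d * poly p t) = t powi s * poly q t"
      using eq[rule_format, OF \<open>t \<noteq> 0\<close>] by (simp add: mult.assoc)
    then show "poly (monom 1 d * p) t = poly q t"
      using \<open>t \<noteq> 0\<close> by (simp add: poly_monom)
  qed
  then have "monom 1 d * p = q" by (rule poly_eq_if_eq_off_0)
  then have "poly q 0 = 0" using \<open>d > 0\<close> by (auto simp: poly_monom)
  with q0 show ?thesis by simp
qed

lemma sum_powi_eq_powi_times_poly:
  fixes t :: complex
  assumes "t \<noteq> 0"
  shows "(\<Sum>k\<le>L. a k * t powi (m + int k)) = t powi m * poly (\<Sum>k\<le>L. monom (a k) k) t"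
  using assms by (simp add: poly_sum poly_monom power_int_add sum_distrib_left algebra_simps)

text \<open>This is the Menelaus condition on a single side: prescribing the truncation by its roots
  up to a scalar and a monomial prescribes its coefficients up to the scalar.\<close>

lemma sum_powi_proportional_iff:
  fixes a :: "nat \<Rightarrow> complex" and q :: "complex poly"
  assumes deg: "degree q = L" and q0: "poly q 0 \<noteq> 0"
  shows "(\<exists>lam. lam \<noteq> 0 \<and> (\<exists>s. \<forall>t. t \<noteq> 0 \<longrightarrow>
            (\<Sum>k\<le>L. a k * t powi (m + int k)) = lam * t powi s * poly q t))
    \<longleftrightarrow> (\<exists>lam. lam \<noteq> 0 \<and> (\<forall>k\<le>L. a k = lam * coeff q k))"
proof
  assume "\<exists>lam. lam \<noteq> 0 \<and> (\<exists>s. \<forall>t. t \<noteq> 0 \<longrightarrow>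
            (\<Sum>k\<le>L. a k * t powi (m + int k)) = lam * t powi s * poly q t)"
  then obtain lam s where lam: "lam \<noteq> 0"
    and eq: "\<forall>t. t \<noteq> 0 \<longrightarrow> (\<Sum>k\<le>L. a k * t powi (m + int k)) = lam * t powi s * poly q t"
    by blast
  define A where "A = (\<Sum>k\<le>L. monom (a k) k)"
  have "A = smult lam q"
  proof (rule powi_times_poly_eq_imp_eq)
    show "\<forall>t. t \<noteq> 0 \<longrightarrow> t powi m * poly A t = t powi s * poly (smult lam q) t"
      using eq by (simp add: A_def sum_powi_eq_powi_times_poly)
    show "degree A \<le> degree (smult lam q)"
      using deg lam by (auto simp: A_def intro!: degree_sum_le order.trans[OF degree_monom_le])
    show "poly (smult lam q) 0 \<noteq> 0" using lam q0 by simp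
  qed
  moreover have "coeff A k = a k" if "k \<le> L" for k
    using that by (simp add: A_def coeff_sum)
  ultimately have "\<forall>k\<le>L. a k = lam * coeff q k" by (metis coeff_smult)
  then show "\<exists>lam. lam \<noteq> 0 \<and> (\<forall>k\<le>L. a k = lam * coeff q k)" using lam by blast
next
  assume "\<exists>lam. lam \<noteq> 0 \<and> (\<forall>k\<le>L. a k = lam * coeff q k)"
  then obtain lam where lam: "lam \<noteq> 0" and a: "\<forall>k\<le>L. a k = lam * coeff q k" by blast
  have "(\<Sum>k\<le>L. monom (a k) k) = smult lam (\<Sum>k\<le>L. monom (coeff q k) k)"
    using a by (intro poly_eqI) (simp add: coeff_sum)
  also have "(\<Sum>k\<le>L. monom (coeff q k) k) = q"
    using deg poly_as_sum_of_monoms by blast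
  finally have "\<forall>t. t \<noteq> 0 \<longrightarrow> (\<Sum>k\<le>L. a k * t powi (m + int k)) = lam * t powi m * poly q t"
    by (simp add: sum_powi_eq_powi_times_poly)
  then show "\<exists>lam. lam \<noteq> 0 \<and> (\<exists>s. \<forall>t. t \<noteq> 0 \<longrightarrow>
            (\<Sum>k\<le>L. a k * t powi (m + int k)) = lam * t powi s * poly q t)"
    using lam by blast
qed

lemma torus_hypersurface_binomial:
  fixes e :: "nat \<Rightarrow> int"
  assumes "\<forall>j\<ge>m. e j = 0" "e \<noteq> (\<lambda>_. 0)"
  shows "torus_hypersurface m {z \<in> torus m. (\<Prod>j<m. z j powi e j) = 1}"
proof -
  define p :: "(nat \<Rightarrow> int) \<Rightarrow> complex" where
    "p f = (if f = e then 1 else if f = (\<lambda>_. 0) then -1 else 0)" for f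
  have supp: "{f. p f \<noteq> 0} = {e, \<lambda>_. 0}" using assms(2) by (auto simp: p_def)
  have "f j = 0" if "p f \<noteq> 0" "j \<ge> m" for f j
  proof -
    have "f = e \<or> f = (\<lambda>_. 0)" using that(1) by (simp add: p_def split: if_splits)
    then show ?thesis using assms(1) that(2) by auto
  qed
  then have "laurent_poly m p" by (simp add: laurent_poly_def supp)
  moreover have "p e \<noteq> 0" "p (\<lambda>_. 0) \<noteq> 0" using assms(2) by (simp_all add: p_def)
  moreover have "laurent_eval m p z = (\<Prod>j<m. z j powi e j) - 1" for z
    unfolding laurent_eval_def supp using assms(2) by (simp add: p_def)
  ultimately show ?thesis unfolding torus_hypersurface_def using assms(2) by force
qed

section \<open>The sides of the polygon\<close>

locale Delta_polygon =
  fixes D :: "(int \<times> int) list" and P :: "(real \<times> real) set" and S :: "(int \<times> int) set"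
  assumes D_nonzero: "(0, 0) \<notin> set D" and D_balanced: "balanced D"
    and D_nondegenerate: "nondegenerate D"
    and finite_S: "finite S" and P_hull: "P = convex hull (toR ` S)"
    and card_lat_face: "\<And>u. primitive u \<Longrightarrow> card (lat (face P u)) =
          1 + (\<Sum>j\<in>{j. j < length D \<and> prim (D ! j) = u}. llen (D ! j))"
begin

definition side :: "int \<times> int \<Rightarrow> (int \<times> int) set" where
  "side u = lat (face P u)"

definition normals :: "(int \<times> int) set" where
  "normals = prim ` set D"

definition side_idx :: "int \<times> int \<Rightarrow> nat set" where
  "side_idx u = {j. j < length D \<and> prim (D ! j) = u}"

definition side_length :: "int \<times> int \<Rightarrow> nat" where
  "side_length u = (\<Sum>j\<in>side_idx u. llen (D ! j))"

definition coord :: "int \<times> int \<Rightarrow> int \<times> int \<Rightarrow> int" where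
  "coord u x = ip x (dualv u)"

text \<open>\<open>coord u\<close> is the exponent of \<open>t\<close> in \<^const>\<open>menelaus\<close>; it grows by one per lattice step
  along \<open>rot u\<close>, i.e. counterclockwise around \<open>P\<close>. So \<open>side_start u\<close> and \<open>side_end u\<close> are the
  first and last lattice points of the side in counterclockwise order.\<close>

definition side_start :: "int \<times> int \<Rightarrow> int \<times> int" where
  "side_start u = arg_min_on (coord u) (side u)"

definition side_point :: "int \<times> int \<Rightarrow> nat \<Rightarrow> int \<times> int" where
  "side_point u k = side_start u + zscale (int k) (rot u)"

definition side_end :: "int \<times> int \<Rightarrow> int \<times> int" where
  "side_end u = side_point u (side_length u)"

lemma inner_le_on_P:
  assumes "y \<in> P" "\<forall>s\<in>S. ip s w \<le> c"
  shows "y \<bullet> toR w \<le> c"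
proof -
  have "toR ` S \<subseteq> {y. toR w \<bullet> y \<le> c}"
    using assms(2) by (auto simp: inner_commute[of "toR w"] inner_toR)
  then have "P \<subseteq> {y. toR w \<bullet> y \<le> c}"
    unfolding P_hull by (rule hull_minimal) (rule convex_halfspace_le)
  then show ?thesis using assms(1) by (auto simp: inner_commute)
qed

lemma toR_in_P: "s \<in> S \<Longrightarrow> toR s \<in> P"
  unfolding P_hull by (simp add: hull_inc)

lemma mem_side_iff: "x \<in> side w \<longleftrightarrow> toR x \<in> P \<and> (\<forall>s\<in>S. ip s w \<le> ip x w)"
proof -
  have "(\<forall>y\<in>P. y \<bullet> toR w \<le> toR x \<bullet> toR w) \<longleftrightarrow> (\<forall>s\<in>S. ip s w \<le> ip x w)"
    using inner_le_on_P[of _ w "ip x w"] toR_in_P by (fastforce simp: inner_toR)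
  then show ?thesis by (simp add: side_def lat_def face_def)
qed

lemma ip_le_on_side: "x \<in> side w \<Longrightarrow> toR y \<in> P \<Longrightarrow> ip y w \<le> ip x w"
  using inner_le_on_P[of "toR y" w "ip x w"] by (simp add: mem_side_iff inner_toR)

lemma side_in_P: "x \<in> side w \<Longrightarrow> toR x \<in> P"
  by (simp add: mem_side_iff)

lemma side_ip_eq: "x \<in> side w \<Longrightarrow> y \<in> side w \<Longrightarrow> ip x w = ip y w"
  using ip_le_on_side[of x w y] ip_le_on_side[of y w x] side_in_P by simp

lemma side_zscale: "g > 0 \<Longrightarrow> side (zscale g w) = side w"
  by (simp add: mem_side_iff set_eq_iff mult_le_cancel_left_pos)

lemma card_side: "primitive u \<Longrightarrow> card (side u) = 1 + side_length u"
  by (simp add: side_def side_length_def side_idx_def card_lat_face)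

lemma finite_side: "primitive u \<Longrightarrow> finite (side u)"
  using card_side[of u] by (intro card_ge_0_finite) simp

lemma finite_normals: "finite normals"
  by (simp add: normals_def)

lemma D_nth_nonzero: "j < length D \<Longrightarrow> D ! j \<noteq> (0, 0)"
  using D_nonzero nth_mem by force

lemma primitive_normal: "u \<in> normals \<Longrightarrow> primitive u"
proof -
  assume "u \<in> normals"
  then obtain a where "a \<in> set D" "u = prim a" by (auto simp: normals_def)
  moreover have "a \<noteq> (0, 0)" using D_nonzero \<open>a \<in> set D\<close> by auto
  ultimately show ?thesis using prim_zscale(1) by simp
qed

lemma side_length_pos: "u \<in> normals \<Longrightarrow> side_length u > 0"
proof -
  assume "u \<in> normals"
  then obtain j where j: "j < length D" "prim (D ! j) = u"
    by (auto simp: normals_def in_set_conv_nth)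
  then have "j \<in> side_idx u" by (simp add: side_idx_def)
  moreover have "finite (side_idx u)" by (simp add: side_idx_def)
  ultimately have "llen (D ! j) \<le> side_length u"
    unfolding side_length_def by (metis member_le_sum zero_le)
  then show ?thesis using llen_pos[OF D_nth_nonzero[OF j(1)]] by simp
qed

lemma normal_if_two_points:
  assumes "primitive v" "x \<in> side v" "y \<in> side v" "x \<noteq> y"
  shows "v \<in> normals"
proof -
  have "card {x, y} \<le> card (side v)"
    using assms by (intro card_mono finite_side) auto
  then have "side_length v \<noteq> 0" using assms(1,4) by (simp add: card_side)
  then obtain j where "j \<in> side_idx v" unfolding side_length_def by (meson sum.neutral)
  then show ?thesis by (auto simp: side_idx_def normals_def)
qed

lemma side_not_subset_singleton:
  assumes "u \<in> normals" shows "\<not> side u \<subseteq> {w}"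
proof
  assume "side u \<subseteq> {w}"
  then have "card (side u) \<le> 1" using card_mono[of "{w}" "side u"] by simp
  then show False using card_side side_length_pos primitive_normal assms by fastforce
qed

lemma coord_shift [simp]: "primitive u \<Longrightarrow> coord u (x + zscale k (rot u)) = coord u x + k"
  using ip_dualv_rot[of u] by (simp add: coord_def ip_rot)

lemma side_eq_shift:
  assumes u: "primitive u" and x: "x \<in> side u" and y: "y \<in> side u"
  shows "y = x + zscale (coord u y - coord u x) (rot u)"
proof -
  have "ip (y - x) u = 0" using side_ip_eq[OF x y] by (simp add: ip_def algebra_simps)
  then obtain k where k: "y - x = zscale k (rot u)" using orthogonal_to_primitive[OF u] by blast
  then have "y = x + zscale k (rot u)" by (metis add.commute diff_add_cancel)
  moreover from this have "k = coord u y - coord u x" using u by simp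
  ultimately show ?thesis by simp
qed

lemma side_segment:
  assumes u: "primitive u" and x: "x \<in> side u" and y: "x + zscale K (rot u) \<in> side u"
    and k: "0 \<le> k" "k \<le> K"
  shows "x + zscale k (rot u) \<in> side u"
proof (cases "K = 0")
  case True
  then show ?thesis using x k by (simp add: zscale_def flip: zero_prod_def)
next
  case False
  define a where "a = real_of_int k / real_of_int K"
  have a: "0 \<le> a" "a \<le> 1" using k False by (auto simp: a_def)
  have "toR (x + zscale k (rot u)) = (1 - a) *\<^sub>R toR x + a *\<^sub>R toR (x + zscale K (rot u))"
    using False by (simp add: toR_def zscale_def a_def field_simps)
  moreover have "convex P" by (simp add: P_hull)
  ultimately have "toR (x + zscale k (rot u)) \<in> P"
    using side_in_P[OF x] side_in_P[OF y] a by (simp add: convexD)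
  then show ?thesis using x by (simp add: mem_side_iff)
qed

lemma side_start:
  assumes "u \<in> normals"
  shows "side_start u \<in> side u" and "y \<in> side u \<Longrightarrow> coord u (side_start u) \<le> coord u y"
proof -
  have fin: "finite (side u)" using finite_side primitive_normal assms by blast
  have ne: "side u \<noteq> {}" using side_not_subset_singleton[OF assms] by blast
  show "side_start u \<in> side u"
    unfolding side_start_def by (rule arg_min_if_finite(1)[OF fin ne])
  show "y \<in> side u \<Longrightarrow> coord u (side_start u) \<le> coord u y"
    unfolding side_start_def using arg_min_if_finite(2)[OF fin ne] by (meson not_le)
qed

lemma side_point_0 [simp]: "side_point u 0 = side_start u"
  by (simp add: side_point_def zscale_def flip: zero_prod_def)

lemma coord_side_point: "primitive u \<Longrightarrow> coord u (side_point u k) = coord u (side_start u) + int k"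
  by (simp add: side_point_def)

lemma inj_side_point: "primitive u \<Longrightarrow> inj (side_point u)"
  by (rule injI) (metis coord_side_point of_nat_eq_iff add_left_cancel)

lemma side_eq_image:
  assumes u: "u \<in> normals"
  shows "side u = side_point u ` {..side_length u}"
proof -
  have pu: "primitive u" using u by (rule primitive_normal)
  define K where "K = {k. side_point u k \<in> side u}"
  have "y \<in> side_point u ` K" if y: "y \<in> side u" for y
  proof -
    have "coord u y - coord u (side_start u) \<ge> 0" using side_start(2)[OF u y] by simp
    then have "y = side_point u (nat (coord u y - coord u (side_start u)))"
      using side_eq_shift[OF pu side_start(1)[OF u] y] by (simp add: side_point_def)
    then show ?thesis using y by (auto simp: K_def)
  qed
  then have side_K: "side u = side_point u ` K" by (auto simp: K_def)
  then have "card K = 1 + side_length u"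
    using card_side[OF pu] card_image[OF inj_on_subset[OF inj_side_point[OF pu]]] by simp
  then have fin: "finite K" by (intro card_ge_0_finite) simp
  have down: "{..k} \<subseteq> K" if "k \<in> K" for k
    using side_segment[OF pu side_start(1)[OF u], of "int k"] that
    by (auto simp: K_def side_point_def)
  have "K \<subseteq> {..side_length u}"
  proof
    fix k assume "k \<in> K"
    then have "card {..k} \<le> card K" using card_mono[OF fin down] by blast
    then show "k \<in> {..side_length u}" using \<open>card K = 1 + side_length u\<close> by simp
  qed
  then have "K = {..side_length u}"
    using \<open>card K = 1 + side_length u\<close> by (intro card_subset_eq) auto
  then show ?thesis using side_K by simp
qed

section \<open>The cyclic order of the side normals\<close>

text \<open>Since the elements of \<open>D\<close> sum to zero, they cannot all lie in a closed half-plane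
  \<open>det2 u x \<le> 0\<close> unless they all lie on its boundary line, which nondegeneracy forbids.\<close>

lemma exists_normal_ccw:
  assumes u: "u \<in> normals" shows "\<exists>v\<in>normals. det2 u v > 0"
proof (rule ccontr)
  assume none: "\<not> ?thesis"
  have "x \<ge> 0" if x: "x \<in> set (map (det2 (- u)) D)" for x
  proof -
    obtain a where a: "a \<in> set D" "x = det2 (- u) a" using x unfolding set_map by blast
    then have "a \<noteq> (0, 0)" using D_nonzero by auto
    with a(2) have "x = gcd (fst a) (snd a) * - det2 u (prim a)"
      using prim_zscale(2) by (metis det2_zscale_right det2_uminus_left)
    moreover have "\<not> det2 u (prim a) > 0" using none a(1) by (auto simp: normals_def)
    ultimately show ?thesis
      using prim_zscale(3)[OF \<open>a \<noteq> (0, 0)\<close>] by (simp add: mult_nonneg_nonpos)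
  qed
  moreover have "sum_list (map (det2 (- u)) D) = det2 (- u) (sum_list D)"
    by (simp only: det2_sum_list)
  moreover have "det2 (- u) (sum_list D) = 0"
    using D_balanced by (simp add: balanced_def det2_def)
  ultimately have "\<forall>x\<in>set (map (det2 (- u)) D). x = 0"
    using sum_list_nonneg_eq_0_iff by metis
  then have "\<forall>a\<in>set D. det2 u a = 0" by simp
  then have "\<forall>a\<in>set D. \<forall>b\<in>set D. det2 a b = 0"
    using det2_eq_0_if_parallel_to primitive_nonzero[OF primitive_normal[OF u]] by blast
  then show False using D_nondegenerate by (auto simp: nondegenerate_def)
qed

definition next_normal :: "int \<times> int \<Rightarrow> int \<times> int" where
  "next_normal u = (SOME v. v \<in> normals \<and> det2 u v > 0 \<and> (\<forall>x\<in>normals. \<not> ccw_between u x v))"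

lemma next_normal_exists:
  assumes u: "u \<in> normals"
  shows "\<exists>v. v \<in> normals \<and> det2 u v > 0 \<and> (\<forall>x\<in>normals. \<not> ccw_between u x v)"
proof -
  define C where "C = {v \<in> normals. det2 u v > 0}"
  have fin: "finite C" and ne: "C \<noteq> {}" and pos: "\<forall>x\<in>C. det2 u x > 0"
    using finite_normals exists_normal_ccw[OF u] by (auto simp: C_def)
  obtain v where v: "v \<in> C" and min: "\<forall>x\<in>C. - ip v u * det2 u x \<le> - ip x u * det2 u v"
    using ex_min_ratio[OF fin ne pos, of "\<lambda>x. - ip x u"] by blast
  have uu: "ip u u > 0" using ip_self_pos primitive_nonzero primitive_normal u by blast
  have "\<not> ccw_between u x v" if x: "x \<in> normals" for x
  proof
    assume between: "ccw_between u x v"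
    then have "x \<in> C" using x by (simp add: C_def ccw_between_def)
    have "ip x u * det2 u v - ip v u * det2 u x = ip u u * det2 x v"
      by (simp add: ip_def det2_def algebra_simps)
    moreover have "ip u u * det2 x v > 0" using between uu by (simp add: ccw_between_def)
    moreover have "- ip v u * det2 u x \<le> - ip x u * det2 u v" using min \<open>x \<in> C\<close> by blast
    ultimately show False by linarith
  qed
  then show ?thesis using v unfolding C_def by blast
qed

lemma next_normal:
  assumes "u \<in> normals"
  shows "next_normal u \<in> normals" and "det2 u (next_normal u) > 0"
    and "x \<in> normals \<Longrightarrow> \<not> ccw_between u x (next_normal u)"
  using someI_ex[OF next_normal_exists[OF assms]] by (simp_all add: next_normal_def)

lemma funpow_next_normal_in: "x \<in> normals \<Longrightarrow> (next_normal ^^ n) x \<in> normals"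
  by (induction n) (simp_all add: next_normal(1))

lemma det2_funpow_next_normal_pos:
  assumes x: "x \<in> normals" and half: "\<forall>n. 0 < s * det2 w ((next_normal ^^ n) x)"
  shows "n > 0 \<Longrightarrow> det2 x ((next_normal ^^ n) x) > 0"
proof (induction n)
  case (Suc n)
  show ?case
  proof (cases "n = 0")
    case True
    then show ?thesis using next_normal(2)[OF x] by simp
  next
    case False
    have "det2 ((next_normal ^^ n) x) ((next_normal ^^ Suc n) x) > 0"
      using next_normal(2)[OF funpow_next_normal_in[OF x]] by simp
    moreover have "det2 x ((next_normal ^^ n) x) > 0" using False Suc.IH by simp
    moreover have "0 < s * det2 w x" using half[rule_format, of 0] by simp
    ultimately show ?thesis
      using det2_pos_trans half[rule_format, of n] half[rule_format, of "Suc n"] by blast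
  qed
qed simp

text \<open>Turning counterclockwise at every step, an orbit of \<open>next_normal\<close> cannot stay
  in an open half-plane: being finite, it must return to its starting point.\<close>

lemma funpow_next_normal_not_in_half_plane:
  assumes x: "x \<in> normals"
  shows "\<not> (\<forall>n. 0 < s * det2 w ((next_normal ^^ n) x))"
proof
  assume half: "\<forall>n. 0 < s * det2 w ((next_normal ^^ n) x)"
  have "range (\<lambda>n. (next_normal ^^ n) x) \<subseteq> normals"
    using funpow_next_normal_in[OF x] by blast
  then have "finite (range (\<lambda>n. (next_normal ^^ n) x))"
    using finite_normals finite_subset by blast
  then have "\<not> inj (\<lambda>n. (next_normal ^^ n) x)"
    using finite_imageD infinite_UNIV_nat by blast
  then obtain i j where "i \<noteq> j" "(next_normal ^^ i) x = (next_normal ^^ j) x"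
    unfolding inj_def by blast
  then obtain i j where ij: "i < j" "(next_normal ^^ i) x = (next_normal ^^ j) x"
    by (cases "i < j") (auto dest: sym simp: not_less_iff_gr_or_eq)
  define y where "y = (next_normal ^^ i) x"
  have orbit_y: "(next_normal ^^ n) y = (next_normal ^^ (n + i)) x" for n
    by (simp add: y_def funpow_add)
  have y: "y \<in> normals" using funpow_next_normal_in[OF x] by (simp add: y_def)
  have half_y: "\<forall>n. 0 < s * det2 w ((next_normal ^^ n) y)" using half by (simp add: orbit_y)
  have "det2 y ((next_normal ^^ (j - i)) y) > 0"
    using det2_funpow_next_normal_pos[OF y half_y] ij(1) by simp
  moreover have "(next_normal ^^ (j - i)) y = (next_normal ^^ j) x"
    using ij(1) by (simp add: orbit_y)
  ultimately have "det2 y y > 0" using ij(2) by (simp add: y_def)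
  then show False by simp
qed

lemma next_normal_stays_cw:
  assumes u: "u \<in> normals" and v: "v \<in> normals" and "next_normal u \<noteq> v" and "det2 v u < 0"
  shows "det2 v (next_normal u) < 0"
proof -
  have "det2 u v > 0" using assms(4) det2_antisym[of v u] by simp
  then have "det2 v (next_normal u) \<le> 0"
    using next_normal(3)[OF u v] det2_antisym[of v] by (auto simp: ccw_between_def)
  moreover have "det2 v (next_normal u) \<noteq> 0"
  proof
    assume "det2 v (next_normal u) = 0"
    then have "next_normal u = - v"
      using primitive_parallel[OF primitive_normal[OF v] primitive_normal[OF next_normal(1)[OF u]]]
        assms(3) by blast
    then show False using next_normal(2)[OF u] \<open>det2 u v > 0\<close> by simp
  qed
  ultimately show ?thesis by simp
qed

lemma next_normal_reaches:
  assumes u0: "u0 \<in> normals" and v: "v \<in> normals"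
  shows "\<exists>k. (next_normal ^^ k) u0 = v"
proof (rule ccontr)
  assume unreached: "\<not> ?thesis"
  define orb where "orb k = (next_normal ^^ k) u0" for k
  have orb_in: "orb k \<in> normals" for k using funpow_next_normal_in[OF u0] by (simp add: orb_def)
  have orb_Suc: "orb (Suc k) = next_normal (orb k)" for k by (simp add: orb_def)
  have not_v: "orb k \<noteq> v" for k using unreached by (auto simp: orb_def)
  have stay_neg: "det2 v (orb (Suc k)) < 0" if "det2 v (orb k) < 0" for k
    using next_normal_stays_cw[OF orb_in v _ that] not_v[of "Suc k"] by (simp add: orb_Suc)
  have leave_0: "det2 v (orb (Suc k)) < 0" if "det2 v (orb k) = 0" for k
  proof -
    have "orb k = - v"
      using primitive_parallel[OF primitive_normal[OF v] primitive_normal[OF orb_in] that] not_v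
      by blast
    then show ?thesis using next_normal(2)[OF orb_in, of k] by (simp add: orb_Suc)
  qed
  consider (neg) k where "det2 v (orb k) < 0" | (pos) "\<forall>k. det2 v (orb k) > 0"
    using leave_0 by (meson linorder_neqE)
  then show False
  proof cases
    case neg
    have "det2 v (orb (n + k)) < 0" for n by (induction n) (simp_all add: neg stay_neg)
    then have "\<forall>n. 0 < (- 1) * det2 v ((next_normal ^^ n) (orb k))"
      by (simp add: orb_def funpow_add)
    then show False using funpow_next_normal_not_in_half_plane[OF orb_in] by blast
  next
    case pos
    then have "\<forall>n. 0 < 1 * det2 v ((next_normal ^^ n) u0)" by (simp add: orb_def)
    then show False using funpow_next_normal_not_in_half_plane[OF u0] by blast
  qed
qed

lemma cyclic_on_next_normal: "cyclic_on next_normal normals"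
proof -
  obtain a where "a \<in> set D" using D_nondegenerate by (auto simp: nondegenerate_def)
  then obtain u0 where u0: "u0 \<in> normals" unfolding normals_def by blast
  have "v \<in> orbit next_normal u0" if v: "v \<in> normals" for v
  proof -
    obtain k where "(next_normal ^^ k) (next_normal u0) = v"
      using next_normal_reaches[OF next_normal(1)[OF u0] v] by blast
    then have "(next_normal ^^ Suc k) u0 = v" by (simp add: funpow_Suc_right del: funpow.simps)
    then show ?thesis unfolding orbit_altdef by blast
  qed
  moreover have "orbit next_normal u0 \<subseteq> normals"
    using funpow_next_normal_in[OF u0] by (auto simp: orbit_altdef)
  ultimately show ?thesis unfolding cyclic_on_def using u0 by blast
qed

section \<open>Adjacent sides\<close>

lemma side_point_in_side: "u \<in> normals \<Longrightarrow> k \<le> side_length u \<Longrightarrow> side_point u k \<in> side u"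
  using side_eq_image by blast

lemma side_end_in_side: "u \<in> normals \<Longrightarrow> side_end u \<in> side u"
  by (simp add: side_end_def side_point_in_side)

lemma side_eq_end_shift:
  assumes u: "u \<in> normals" and y: "y \<in> side u"
  obtains k where "k \<le> 0" "y = side_end u + zscale k (rot u)"
proof -
  have pu: "primitive u" using u by (rule primitive_normal)
  obtain j where "j \<le> side_length u" "y = side_point u j" using y side_eq_image[OF u] by auto
  then have "coord u y \<le> coord u (side_end u)" using pu by (simp add: side_end_def coord_side_point)
  with side_eq_shift[OF pu side_end_in_side[OF u] y] show ?thesis
    by (intro that[of "coord u y - coord u (side_end u)"]) simp_all
qed

lemma normal_between_if_two_points:
  assumes uu': "det2 u u' > 0" and ab: "a > 0" "b > 0"
    and xy: "x \<in> side (zscale b u + zscale a u')" "y \<in> side (zscale b u + zscale a u')" "x \<noteq> y"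
  shows "\<exists>v\<in>normals. ccw_between u v u'"
proof -
  define w where "w = zscale b u + zscale a u'"
  have "det2 u w = a * det2 u u'" "det2 w u' = b * det2 u u'" by (simp_all add: w_def)
  then have pos: "det2 u w > 0" "det2 w u' > 0" using uu' ab by simp_all
  then have "w \<noteq> (0, 0)" by (auto simp: det2_def)
  note g = prim_zscale[OF this]
  have "side (prim w) = side w" using side_zscale[OF g(3), of "prim w"] g(2) by simp
  then have "prim w \<in> normals" using normal_if_two_points[OF g(1)] xy by (simp add: w_def)
  moreover have "det2 u (prim w) > 0" "det2 (prim w) u' > 0"
    using pos g(2,3) det2_zscale_right[of u _ "prim w"] det2_zscale_left[of _ "prim w" u']
    by (metis zero_less_mult_pos)+
  ultimately show ?thesis by (auto simp: ccw_between_def)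
qed

text \<open>Rotate the supporting line at \<open>e \<in> side u\<close> towards \<open>u'\<close> until it hits a further point
  \<open>y0\<close> of \<open>S\<close>: the first point hit minimises the ratio \<open>A / B\<close> of the two gaps below.\<close>

lemma mem_side_tilted:
  assumes e: "e \<in> side u" and y0: "y0 \<in> S" "ip e u' < ip y0 u'"
    and min: "\<forall>y\<in>S. ip e u' < ip y u' \<longrightarrow>
      (ip e u - ip y0 u) * (ip y u' - ip e u') \<le> (ip e u - ip y u) * (ip y0 u' - ip e u')"
  shows "e \<in> side (zscale (ip y0 u' - ip e u') u + zscale (ip e u - ip y0 u) u')"
    and "y0 \<in> side (zscale (ip y0 u' - ip e u') u + zscale (ip e u - ip y0 u) u')"
proof -
  define A where "A y = ip e u - ip y u" for y
  define B where "B y = ip y u' - ip e u'" for y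
  define w where "w = zscale (B y0) u + zscale (A y0) u'"
  have A_nonneg: "A y \<ge> 0" if "y \<in> S" for y
    using ip_le_on_side[OF e toR_in_P[OF that]] by (simp add: A_def)
  have gap: "ip e w - ip s w = B y0 * A s - A y0 * B s" for s
    by (simp add: w_def A_def B_def algebra_simps)
  have "ip s w \<le> ip e w" if s: "s \<in> S" for s
  proof (cases "B s > 0")
    case True
    then have "A y0 * B s \<le> A s * B y0" using min s by (simp add: A_def B_def)
    then show ?thesis using gap[of s] by (simp add: mult.commute)
  next
    case False
    then have "A y0 * B s \<le> 0" using A_nonneg[OF y0(1)] by (simp add: mult_nonneg_nonpos)
    moreover have "B y0 * A s \<ge> 0" using y0(2) A_nonneg[OF s] by (simp add: B_def)
    ultimately show ?thesis using gap[of s] by linarith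
  qed
  moreover have "ip y0 w = ip e w" by (simp add: w_def A_def B_def algebra_simps)
  ultimately have "e \<in> side w" "y0 \<in> side w"
    using side_in_P[OF e] toR_in_P[OF y0(1)] by (auto simp: mem_side_iff)
  then show "e \<in> side (zscale (ip y0 u' - ip e u') u + zscale (ip e u - ip y0 u) u')"
    and "y0 \<in> side (zscale (ip y0 u' - ip e u') u + zscale (ip e u - ip y0 u) u')"
    by (simp_all add: w_def A_def B_def)
qed

text \<open>Otherwise the tilted side would carry two lattice points and have its normal strictly
  between \<open>u\<close> and \<open>next_normal u\<close>.\<close>

lemma side_end_in_next_side:
  assumes u: "u \<in> normals"
  shows "side_end u \<in> side (next_normal u)"
proof (rule ccontr)
  define e where "e = side_end u"
  define u' where "u' = next_normal u"
  have e: "e \<in> side u" using side_end_in_side[OF u] by (simp add: e_def)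
  have uu': "det2 u u' > 0" using next_normal(2)[OF u] by (simp add: u'_def)
  assume "side_end u \<notin> side (next_normal u)"
  then obtain y where "y \<in> S" "ip e u' < ip y u'"
    using side_in_P[OF e] by (auto simp: mem_side_iff e_def u'_def not_le)
  define Y where "Y = {y \<in> S. ip e u' < ip y u'}"
  have Y: "finite Y" "Y \<noteq> {}" "\<forall>y\<in>Y. ip y u' - ip e u' > 0"
    using finite_S \<open>y \<in> S\<close> \<open>ip e u' < ip y u'\<close> unfolding Y_def by (simp, blast, simp)
  have off_side: "ip y u < ip e u" if y: "y \<in> Y" for y
  proof -
    have yS: "y \<in> S" using y by (simp add: Y_def)
    have "ip y u \<noteq> ip e u"
    proof
      assume "ip y u = ip e u"
      then have "\<forall>s\<in>S. ip s u \<le> ip y u" using e by (simp add: mem_side_iff)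
      then have "y \<in> side u" using toR_in_P[OF yS] by (simp add: mem_side_iff)
      then obtain k where "k \<le> 0" "y = e + zscale k (rot u)"
        unfolding e_def by (rule side_eq_end_shift[OF u])
      then have "ip y u' \<le> ip e u'" using uu' by (simp add: mult_nonpos_nonneg)
      then show False using y by (simp add: Y_def)
    qed
    moreover have "ip y u \<le> ip e u" using ip_le_on_side[OF e toR_in_P[OF yS]] .
    ultimately show ?thesis by simp
  qed
  obtain y0 where y0: "y0 \<in> Y"
    and min: "\<forall>y\<in>Y. (ip e u - ip y0 u) * (ip y u' - ip e u') \<le> (ip e u - ip y u) * (ip y0 u' - ip e u')"
    using ex_min_ratio[OF Y, of "\<lambda>y. ip e u - ip y u"] by blast
  have y0S: "y0 \<in> S" and y0_above: "ip e u' < ip y0 u'" and "e \<noteq> y0"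
    using y0 by (auto simp: Y_def)
  have "\<forall>y\<in>S. ip e u' < ip y u' \<longrightarrow>
      (ip e u - ip y0 u) * (ip y u' - ip e u') \<le> (ip e u - ip y u) * (ip y0 u' - ip e u')"
    using min unfolding Y_def by blast
  note tilted = mem_side_tilted[OF e y0S y0_above this]
  have "0 < ip e u - ip y0 u" using off_side[OF y0] by simp
  then have "\<exists>v\<in>normals. ccw_between u v u'"
    using normal_between_if_two_points[OF uu' _ Y(3)[rule_format, OF y0] tilted \<open>e \<noteq> y0\<close>] by blast
  then show False using next_normal(3)[OF u] unfolding u'_def by blast
qed

lemma side_end_eq_start_next:
  assumes u: "u \<in> normals"
  shows "side_end u = side_start (next_normal u)"
proof -
  define u' where "u' = next_normal u"
  have u': "u' \<in> normals" and uu': "det2 u u' > 0" using next_normal[OF u] by (simp_all add: u'_def)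
  have e: "side_end u \<in> side u'" using side_end_in_next_side[OF u] by (simp add: u'_def)
  define k where "k = coord u' (side_end u) - coord u' (side_start u')"
  have "k \<ge> 0" using side_start(2)[OF u' e] by (simp add: k_def)
  have shift: "side_end u = side_start u' + zscale k (rot u')"
    using side_eq_shift[OF primitive_normal[OF u'] side_start(1)[OF u'] e] by (simp add: k_def)
  have "ip (side_start u') u \<le> ip (side_end u) u"
    using ip_le_on_side[OF side_end_in_side[OF u] side_in_P[OF side_start(1)[OF u']]] .
  also have "ip (side_end u) u = ip (side_start u') u - k * det2 u u'"
    by (simp add: shift det2_antisym[of u'])
  finally have "k = 0" using \<open>k \<ge> 0\<close> uu' by (simp add: mult_le_0_iff)
  then show ?thesis using shift by (simp add: u'_def zscale_def flip: zero_prod_def)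
qed

lemma side_subset_singleton_if_ccw_between:
  assumes uv: "det2 u v > 0" and uu': "det2 u u' > 0" and u'v: "det2 u' v > 0"
    and w: "w \<in> side u" "w \<in> side v"
  shows "side u' \<subseteq> {w}"
proof
  fix y assume y: "y \<in> side u'"
  have le: "ip y u \<le> ip w u" "ip y v \<le> ip w v" "ip w u' \<le> ip y u'"
    using ip_le_on_side[OF w(1) side_in_P[OF y]] ip_le_on_side[OF w(2) side_in_P[OF y]]
      ip_le_on_side[OF y side_in_P[OF w(1)]] by simp_all
  have "det2 u' v * (ip w u - ip y u) + det2 u u' * (ip w v - ip y v)
      = det2 u v * (ip w u' - ip y u')"
    by (simp add: det2_def ip_def algebra_simps)
  also have "\<dots> \<le> 0" using le(3) uv by (simp add: mult_nonneg_nonpos)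
  moreover have "det2 u' v * (ip w u - ip y u) \<ge> 0" "det2 u u' * (ip w v - ip y v) \<ge> 0"
    using le(1,2) uu' u'v by simp_all
  ultimately have "det2 u' v * (ip w u - ip y u) = 0" "det2 u u' * (ip w v - ip y v) = 0"
    by linarith+
  then have "ip y u = ip w u" "ip y v = ip w v" using uu' u'v by simp_all
  then show "y \<in> {w}" using eq_if_ip_eq[of u v y w] uv by simp
qed

lemma sides_meet_ccw:
  assumes u: "u \<in> normals" and v: "v \<in> normals" and uv: "det2 u v > 0"
    and w: "w \<in> side u" "w \<in> side v"
  shows "v = next_normal u \<and> w = side_end u"
proof -
  define u' where "u' = next_normal u"
  have u': "u' \<in> normals" and uu': "det2 u u' > 0" and not_between: "\<not> ccw_between u v u'"
    using next_normal[OF u] v by (simp_all add: u'_def)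
  have "v = u'"
  proof (rule ccontr)
    assume "v \<noteq> u'"
    moreover have "v \<noteq> - u'"
    proof
      assume "v = - u'"
      then show False using uv uu' by simp
    qed
    ultimately have "det2 u' v \<noteq> 0"
      using primitive_parallel[OF primitive_normal[OF u'] primitive_normal[OF v]] by blast
    moreover have "\<not> det2 u' v < 0"
      using not_between uv det2_antisym[of u' v] by (auto simp: ccw_between_def)
    ultimately have "det2 u' v > 0" by simp
    then have "side u' \<subseteq> {w}" using side_subset_singleton_if_ccw_between[OF uv uu' _ w] by simp
    then show False using side_not_subset_singleton[OF u'] by blast
  qed
  moreover have "side_end u \<in> side v"
    using side_end_in_next_side[OF u] \<open>v = u'\<close> by (simp add: u'_def)
  then have "w = side_end u"
    using eq_if_ip_eq[of u v w "side_end u"] uv side_ip_eq[OF w(1) side_end_in_side[OF u]]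
      side_ip_eq[OF w(2)] by simp
  ultimately show ?thesis by (simp add: u'_def)
qed

lemma sides_not_antipodal:
  assumes u: "u \<in> normals" and w: "w \<in> side u" "w \<in> side (- u)"
  shows False
proof -
  define u' where "u' = next_normal u"
  have u': "u' \<in> normals" and uu': "det2 u u' > 0" using next_normal[OF u] by (simp_all add: u'_def)
  have flat: "ip y u = ip w u" if "toR y \<in> P" for y
    using ip_le_on_side[OF w(1) that] ip_le_on_side[OF w(2) that] by (simp add: ip_def)
  obtain y1 where y1: "y1 \<in> side u'" using side_not_subset_singleton[OF u'] by blast
  have "side u' \<subseteq> {y1}"
  proof
    fix y assume y: "y \<in> side u'"
    have "ip y u = ip y1 u" using flat[OF side_in_P[OF y]] flat[OF side_in_P[OF y1]] by simp
    moreover have "ip y u' = ip y1 u'" using side_ip_eq[OF y y1] .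
    ultimately show "y \<in> {y1}" using eq_if_ip_eq[of u u' y y1] uu' by simp
  qed
  then show False using side_not_subset_singleton[OF u'] by blast
qed

lemma sides_meet:
  assumes u: "u \<in> normals" and v: "v \<in> normals" and "u \<noteq> v"
    and w: "w \<in> side u" "w \<in> side v"
  shows "(v = next_normal u \<and> w = side_end u) \<or> (u = next_normal v \<and> w = side_end v)"
proof -
  have "det2 u v \<noteq> 0"
  proof
    assume "det2 u v = 0"
    then have "v = - u"
      using primitive_parallel[OF primitive_normal[OF u] primitive_normal[OF v]] \<open>u \<noteq> v\<close> by blast
    then show False using sides_not_antipodal[OF u] w by simp
  qed
  then have "det2 u v > 0 \<or> det2 v u > 0" using det2_antisym[of v u] by linarith
  then show ?thesis using sides_meet_ccw[OF u v _ w] sides_meet_ccw[OF v u _ w(2,1)] by blast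
qed

lemma glue_along_sides:
  assumes agree: "\<forall>u\<in>normals. f u (side_end u) = f (next_normal u) (side_start (next_normal u))"
  obtains g where "\<And>u x. u \<in> normals \<Longrightarrow> x \<in> side u \<Longrightarrow> g x = f u x"
proof -
  define g where "g x = f (SOME u. u \<in> normals \<and> x \<in> side u) x" for x
  have "g x = f u x" if u: "u \<in> normals" and x: "x \<in> side u" for u x
  proof -
    define v where "v = (SOME u. u \<in> normals \<and> x \<in> side u)"
    have "\<exists>u. u \<in> normals \<and> x \<in> side u" using u x by blast
    then have v: "v \<in> normals" "x \<in> side v" unfolding v_def by (metis (mono_tags, lifting) someI_ex)+
    have gv: "g x = f v x" by (simp add: g_def v_def)
    show ?thesis
    proof (cases "u = v")
      case False
      then have "(v = next_normal u \<and> x = side_end u) \<or> (u = next_normal v \<and> x = side_end v)"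
        using sides_meet[OF u v(1) _ x v(2)] by blast
      then show ?thesis
      proof
        assume "v = next_normal u \<and> x = side_end u"
        then show ?thesis using gv agree[rule_format, OF u] side_end_eq_start_next[OF u] by simp
      next
        assume "u = next_normal v \<and> x = side_end v"
        then show ?thesis
          using gv agree[rule_format, OF v(1)] side_end_eq_start_next[OF v(1)] by simp
      qed
    qed (simp add: gv)
  qed
  then show ?thesis by (rule that)
qed

section \<open>The Menelaus condition\<close>

definition side_poly :: "(nat \<Rightarrow> complex) \<Rightarrow> int \<times> int \<Rightarrow> complex poly" where
  "side_poly z u = (\<Prod>j\<in>side_idx u. [:- z j, 1:] ^ llen (D ! j))"

definition side_prod :: "(nat \<Rightarrow> complex) \<Rightarrow> int \<times> int \<Rightarrow> complex" where
  "side_prod z u = (\<Prod>j\<in>side_idx u. z j ^ llen (D ! j))"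

lemma degree_side_poly: "degree (side_poly z u) = side_length u"
  by (simp add: side_poly_def side_length_def degree_prod_sum_eq degree_linear_power)

lemma coeff_side_poly_length: "coeff (side_poly z u) (side_length u) = 1"
proof -
  have "lead_coeff (side_poly z u) = 1"
    by (simp add: side_poly_def lead_coeff_prod lead_coeff_power)
  then show ?thesis by (simp add: degree_side_poly)
qed

lemma poly_side_poly: "poly (side_poly z u) t = (\<Prod>j\<in>side_idx u. (t - z j) ^ llen (D ! j))"
  by (simp add: side_poly_def poly_prod)

text \<open>Evenness of \<open>D\<close> makes every root multiplicity \<open>llen (D ! j)\<close> even, so the
  constant term of the side polynomial carries no sign.\<close>

lemma poly_side_poly_0:
  assumes "even_multiset D"
  shows "poly (side_poly z u) 0 = side_prod z u"
proof -
  have "even (llen (D ! j))" if "j \<in> side_idx u" for j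
  proof -
    have "D ! j \<in> set D" using that by (simp add: side_idx_def)
    then have "2 dvd gcd (fst (D ! j)) (snd (D ! j))"
      using assms by (simp add: even_multiset_def)
    then show ?thesis by (simp add: llen_def even_nat_iff)
  qed
  then show ?thesis
    unfolding poly_side_poly side_prod_def by (intro prod.cong) simp_all
qed

lemma side_prod_nonzero: "z \<in> torus (length D) \<Longrightarrow> side_prod z u \<noteq> 0"
  by (simp add: side_prod_def torus_def side_idx_def)

lemma prod_side_prod: "(\<Prod>u\<in>normals. side_prod z u) = (\<Prod>j<length D. z j ^ llen (D ! j))"
proof -
  have "(\<Prod>u\<in>normals. side_prod z u)
      = (\<Prod>u\<in>normals. \<Prod>j\<in>{j \<in> {..<length D}. prim (D ! j) = u}. z j ^ llen (D ! j))"
    by (simp add: side_prod_def side_idx_def conj_commute)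
  also have "\<dots> = (\<Prod>j<length D. z j ^ llen (D ! j))"
    by (rule prod.group) (auto simp: normals_def)
  finally show ?thesis .
qed

lemma sum_side:
  assumes "u \<in> normals"
  shows "(\<Sum>w\<in>side u. f w) = (\<Sum>k\<le>side_length u. f (side_point u k))"
  using sum.reindex[OF inj_on_subset[OF inj_side_point[OF primitive_normal[OF assms]]]]
  by (simp add: side_eq_image[OF assms])

definition fits_side :: "(int \<times> int \<Rightarrow> complex) \<Rightarrow> (nat \<Rightarrow> complex) \<Rightarrow> int \<times> int \<Rightarrow> bool" where
  "fits_side c z u \<longleftrightarrow>
     (\<exists>lam. lam \<noteq> 0 \<and> (\<forall>k\<le>side_length u. c (side_point u k) = lam * coeff (side_poly z u) k))"

lemma menelaus_iff_fits_side:
  assumes ev: "even_multiset D" and z: "z \<in> torus (length D)"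
  shows "menelaus D P z \<longleftrightarrow> (\<exists>c. \<forall>u\<in>normals. fits_side c z u)"
proof -
  have side_cond: "(\<exists>lam. lam \<noteq> 0 \<and> (\<exists>s. \<forall>t. t \<noteq> 0 \<longrightarrow>
          (\<Sum>w\<in>side u. c w * t powi coord u w) = lam * t powi s * poly (side_poly z u) t))
      \<longleftrightarrow> fits_side c z u" if u: "u \<in> normals" for c u
  proof -
    have "(\<Sum>w\<in>side u. c w * t powi coord u w)
        = (\<Sum>k\<le>side_length u. c (side_point u k) * t powi (coord u (side_start u) + int k))" for t
      using coord_side_point[OF primitive_normal[OF u]] by (simp add: sum_side[OF u])
    then show ?thesis
      unfolding fits_side_def
      using sum_powi_proportional_iff[OF degree_side_poly, of z u "\<lambda>k. c (side_point u k)"]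
        poly_side_poly_0[OF ev] side_prod_nonzero[OF z] by simp
  qed
  have "menelaus D P z \<longleftrightarrow> (\<exists>c. \<forall>u\<in>normals. \<exists>lam. lam \<noteq> 0 \<and> (\<exists>s. \<forall>t. t \<noteq> 0 \<longrightarrow>
          (\<Sum>w\<in>side u. c w * t powi coord u w) = lam * t powi s * poly (side_poly z u) t))"
    unfolding menelaus_def normals_def side_def coord_def poly_side_poly side_idx_def
    by (simp add: all_set_conv_all_nth)
  also have "\<dots> \<longleftrightarrow> (\<exists>c. \<forall>u\<in>normals. fits_side c z u)"
    using side_cond by (simp cong: ball_cong)
  finally show ?thesis .
qed

text \<open>The scalar of a side shows up at its two ends: as \<open>lam * side_prod z u\<close> at the start
  and as \<open>lam\<close> at the end, which is the start of the next side.\<close>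

lemma fits_side_cocycle:
  assumes ev: "even_multiset D" and z: "z \<in> torus (length D)"
    and u: "u \<in> normals" and fits: "fits_side c z u"
  shows "c (side_start u) \<noteq> 0 \<and> c (side_start u) = side_prod z u * c (side_start (next_normal u))"
proof -
  obtain lam where "lam \<noteq> 0"
    and lam: "\<forall>k\<le>side_length u. c (side_point u k) = lam * coeff (side_poly z u) k"
    using fits by (auto simp: fits_side_def)
  have "c (side_start u) = lam * side_prod z u"
    using lam[rule_format, of 0] poly_side_poly_0[OF ev] by (simp add: poly_0_coeff_0 mult.commute)
  moreover have "c (side_start (next_normal u)) = lam"
    using lam[rule_format, of "side_length u"] coeff_side_poly_length side_end_eq_start_next[OF u]
    by (simp add: side_end_def)
  ultimately show ?thesis using \<open>lam \<noteq> 0\<close> side_prod_nonzero[OF z] by simp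
qed

lemma fits_side_if_cocycle:
  assumes ev: "even_multiset D"
    and G: "\<forall>u\<in>normals. G u \<noteq> 0 \<and> G u = side_prod z u * G (next_normal u)"
  shows "\<exists>c. \<forall>u\<in>normals. fits_side c z u"
proof -
  define val where
    "val u x = G (next_normal u) * coeff (side_poly z u) (nat (coord u x - coord u (side_start u)))"
    for u x
  have val_point: "val u (side_point u k) = G (next_normal u) * coeff (side_poly z u) k"
    if "u \<in> normals" for u k
    using coord_side_point[OF primitive_normal[OF that]] by (simp add: val_def)
  have val_start: "val u (side_start u) = G u" if "u \<in> normals" for u
  proof -
    have "G u = side_prod z u * G (next_normal u)" using G that by blast
    then show ?thesis
      using val_point[OF that, of 0] poly_side_poly_0[OF ev] by (simp add: poly_0_coeff_0 mult.commute)
  qed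
  have val_end: "val u (side_end u) = G (next_normal u)" if "u \<in> normals" for u
    using val_point[OF that] coeff_side_poly_length by (simp add: side_end_def)
  have "\<forall>u\<in>normals. val u (side_end u) = val (next_normal u) (side_start (next_normal u))"
    using val_start val_end next_normal(1) by simp
  then obtain c where c: "\<And>u x. u \<in> normals \<Longrightarrow> x \<in> side u \<Longrightarrow> c x = val u x"
    by (rule glue_along_sides) blast
  have "fits_side c z u" if u: "u \<in> normals" for u
  proof -
    have "G (next_normal u) \<noteq> 0" using G next_normal(1)[OF u] by blast
    moreover have "c (side_point u k) = G (next_normal u) * coeff (side_poly z u) k"
      if "k \<le> side_length u" for k
      using c[OF u side_point_in_side[OF u that]] val_point[OF u] by simp
    ultimately show ?thesis unfolding fits_side_def by blast
  qed
  then show ?thesis by blast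
qed

theorem menelaus_iff_prod_eq_1:
  assumes ev: "even_multiset D" and z: "z \<in> torus (length D)"
  shows "menelaus D P z \<longleftrightarrow> (\<Prod>j<length D. z j ^ llen (D ! j)) = 1"
proof
  assume "menelaus D P z"
  then obtain c where "\<forall>u\<in>normals. fits_side c z u" using menelaus_iff_fits_side[OF ev z] by blast
  then have "\<forall>u\<in>normals. c (side_start u) \<noteq> 0
      \<and> c (side_start u) = side_prod z u * c (side_start (next_normal u))"
    using fits_side_cocycle[OF ev z] by blast
  then have "(\<Prod>u\<in>normals. side_prod z u) = 1"
    by (rule cyclic_on_cocycle_prod_eq_1[OF cyclic_on_next_normal])
  then show "(\<Prod>j<length D. z j ^ llen (D ! j)) = 1" by (simp add: prod_side_prod)
next
  assume "(\<Prod>j<length D. z j ^ llen (D ! j)) = 1"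
  then have "(\<Prod>u\<in>normals. side_prod z u) = 1" by (simp add: prod_side_prod)
  then obtain G where "\<forall>u\<in>normals. G u \<noteq> 0 \<and> G u = side_prod z u * G (next_normal u)"
    using cyclic_on_cocycle_exists[OF cyclic_on_next_normal] side_prod_nonzero[OF z] by blast
  then show "menelaus D P z"
    using fits_side_if_cocycle[OF ev] menelaus_iff_fits_side[OF ev z] by blast
qed

end

theorem lemma2p2:
  fixes D :: "(int \<times> int) list" and P :: "(real \<times> real) set"
  assumes "(0, 0) \<notin> set D"
    and "balanced D" and "nondegenerate D" and "even_multiset D"
    and "is_P_Delta D P"
  shows "torus_hypersurface (length D) {z \<in> torus (length D). menelaus D P z}"
proof -
  obtain S where "finite S" "P = convex hull (toR ` S)"
    and "\<forall>u. primitive u \<longrightarrow> card (lat (face P u)) =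
          1 + (\<Sum>j\<in>{j. j < length D \<and> prim (D ! j) = u}. llen (D ! j))"
    using assms(5) unfolding is_P_Delta_def by blast
  then interpret Delta_polygon D P S
    using assms(1-3) by unfold_locales auto
  define e where "e j = (if j < length D then int (llen (D ! j)) else 0)" for j
  have "\<forall>j\<ge>length D. e j = 0" by (simp add: e_def)
  moreover have "D \<noteq> []" using assms(3) by (auto simp: nondegenerate_def)
  then have "e \<noteq> (\<lambda>_. 0)" using llen_pos[OF D_nth_nonzero, of 0] by (auto simp: e_def fun_eq_iff)
  ultimately have binomial: "torus_hypersurface (length D)
      {z \<in> torus (length D). (\<Prod>j<length D. z j powi e j) = 1}"
    by (rule torus_hypersurface_binomial)
  have powi_e: "(\<Prod>j<length D. z j powi e j) = (\<Prod>j<length D. z j ^ llen (D ! j))"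
    for z :: "nat \<Rightarrow> complex"
    by (intro prod.cong) (simp_all add: e_def)
  have "{z \<in> torus (length D). menelaus D P z}
      = {z \<in> torus (length D). (\<Prod>j<length D. z j powi e j) = 1}"
    using menelaus_iff_prod_eq_1[OF assms(4)] by (auto simp: powi_e)
  with binomial show ?thesis by simp
qed

end
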